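(* Assume (A1) and (A3). Let $x\in\mathcal{C}$ with $\beta>\max\{\beta_1(x),\beta_2(x),\beta_3(x)\}$, and assume $\|\nabla g(x)\|\le\varepsilon_1$ for some $\varepsilon_1\le R/2$. Then for any $d\in\mathcal{E}$ with $\|d\|=1$, the point $x+td$ lies in $\mathcal{C}$ for all $t\in[0,t_2(x)]$, where $$t_2(x)=\frac{-\sigma_1(\mathrm{D}h(x))+\sqrt{\sigma_1(\mathrm{D}h(x))^2+2C_hR}}{2C_h}.$$
   Context: Let $\mathcal{E}$ be a Euclidean space with inner product $\langle\cdot,\cdot\rangle$ and norm $\|\cdot\|$ (2-norm on $\mathbb{R}^m$), and $f\colon\mathcal{E}\to\mathbb{R}$, $h\colon\mathcal{E}\to\mathbb{R}^m$ be $C^\infty$. $\mathrm{D}h(x)$ is the differential, $\mathrm{D}h(x)^*$ its adjoint, $\sigma_1$ and $\sigma_{\min}=\sigma_m$ the largest and $m$-th singular values. $\mathcal{D}=\{x:\operatorname{rank}\mathrm{D}h(x)=m\}$; for $x\in\mathcal{D}$, $\lambda(x)=(\mathrm{D}h(x)^* )^\dagger[\nabla f(x)]$ (Moore–Penrose). For $\beta\ge0$, $g(x)=f(x)-\langle h(x),\lambda(x)\rangle+\beta\|h(x)\|^2$. (A1): there are $R,\underline{\sigma}>0$ with $\sigma_{\min}(\mathrm{D}h(x))\ge\underline{\sigma}$ for all $x\in\mathcal{C}=\{x:\|h(x)\|\le R\}$. (A3): there is $C_h>0$ with $h(x+v)=h(x)+\mathrm{D}h(x)[v]+E(x,v)$,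 $\|E(x,v)\|\le C_h\|v\|^2$ for all $x\in\mathcal{C}$, $v\in\mathcal{E}$. For $x\in\mathcal{C}$: $C_\lambda(x)=\|\mathrm{D}\lambda(x)\|_{\mathrm{op}}$, $\beta_1(x)=\sigma_1(\mathrm{D}h(x))C_\lambda(x)/(2\sigma_{\min}(\mathrm{D}h(x))^2)$, $\beta_2(x)=C_\lambda(x)/\sigma_{\min}(\mathrm{D}h(x))$, $\beta_3(x)=1/\sigma_{\min}(\mathrm{D}h(x))$. *)

theory Defs
  imports "HOL-Analysis.Analysis"
begin

primrec iter_dd :: "'a::real_normed_vector list \<Rightarrow> ('a \<Rightarrow> 'b::real_normed_vector) \<Rightarrow> 'a \<Rightarrow> 'b" where
  "iter_dd [] f = f"
| "iter_dd (v # vs) f = (\<lambda>x. frechet_derivative (iter_dd vs f) (at x) v)"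

definition smooth :: "('a::real_normed_vector \<Rightarrow> 'b::real_normed_vector) \<Rightarrow> bool" where
  "smooth f \<longleftrightarrow> (\<forall>vs x. iter_dd vs f differentiable (at x))"

definition grad :: "('a::real_inner \<Rightarrow> real) \<Rightarrow> 'a \<Rightarrow> 'a" where
  "grad f x = (SOME D. GDERIV f x :> D)"

definition Dh :: "('a::real_normed_vector \<Rightarrow> 'b::real_normed_vector) \<Rightarrow> 'a \<Rightarrow> 'a \<Rightarrow> 'b" where
  "Dh h x = frechet_derivative h (at x)"

definition moore_penrose :: "('b::real_inner \<Rightarrow> 'a::real_inner) \<Rightarrow> 'a \<Rightarrow> 'b" where
  "moore_penrose B = (THE P. linear P \<and> (\<forall>u. B (P (B u)) = B u) \<and> (\<forall>w. P (B (P w)) = P w)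
      \<and> (\<forall>w z. B (P w) \<bullet> z = w \<bullet> B (P z)) \<and> (\<forall>u v. P (B u) \<bullet> v = u \<bullet> P (B v)))"

text \<open>k-th singular value of a linear map A (Courant-Fischer max-min characterisation);
  set to 0 when k = 0 or k exceeds the dimension of the domain.\<close>
definition sing_val :: "nat \<Rightarrow> ('a::euclidean_space \<Rightarrow> 'b::real_normed_vector) \<Rightarrow> real" where
  "sing_val k A = (if 0 < k \<and> k \<le> DIM('a) then
      Sup {Inf {norm (A v) | v. v \<in> V \<and> norm v = 1} | V. subspace V \<and> dim V = k}
    else 0)"

definition sigma1 :: "('a::euclidean_space \<Rightarrow> 'b::real_normed_vector) \<Rightarrow> real" where
  "sigma1 A = sing_val 1 A"

definition sigma_min :: "('a::euclidean_space \<Rightarrow> real^'m::finite) \<Rightarrow> real" where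
  "sigma_min A = sing_val CARD('m) A"

definition lam :: "('a::euclidean_space \<Rightarrow> real) \<Rightarrow> ('a \<Rightarrow> real^'m::finite) \<Rightarrow> 'a \<Rightarrow> real^'m" where
  "lam f h x = moore_penrose (adjoint (Dh h x)) (grad f x)"

definition gfun :: "('a::euclidean_space \<Rightarrow> real) \<Rightarrow> ('a \<Rightarrow> real^'m::finite) \<Rightarrow> real \<Rightarrow> 'a \<Rightarrow> real" where
  "gfun f h \<beta> x = f x - h x \<bullet> lam f h x + \<beta> * (norm (h x))\<^sup>2"

definition C_lam :: "('a::euclidean_space \<Rightarrow> real) \<Rightarrow> ('a \<Rightarrow> real^'m::finite) \<Rightarrow> 'a \<Rightarrow> real" where
  "C_lam f h x = onorm (frechet_derivative (lam f h) (at x))"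

definition beta1 :: "('a::euclidean_space \<Rightarrow> real) \<Rightarrow> ('a \<Rightarrow> real^'m::finite) \<Rightarrow> 'a \<Rightarrow> real" where
  "beta1 f h x = sigma1 (Dh h x) * C_lam f h x / (2 * (sigma_min (Dh h x))\<^sup>2)"

definition beta2 :: "('a::euclidean_space \<Rightarrow> real) \<Rightarrow> ('a \<Rightarrow> real^'m::finite) \<Rightarrow> 'a \<Rightarrow> real" where
  "beta2 f h x = C_lam f h x / sigma_min (Dh h x)"

definition beta3 :: "('a::euclidean_space \<Rightarrow> real^'m::finite) \<Rightarrow> 'a \<Rightarrow> real" where
  "beta3 h x = 1 / sigma_min (Dh h x)"

end

theory Submission
  imports Defs
begin

text \<open>Testing \<open>\<nabla>g(x)\<close> against \<open>v = Dh(x)\<^sup>* h(x)\<close>, the \<open>\<nabla>f\<close>-terms cancel because \<open>\<lambda>(x)\<close> solves the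
  normal equations \<open>Dh Dh\<^sup>* \<lambda> = Dh \<nabla>f\<close>, so \<open>\<langle>\<nabla>g(x), v\<rangle> = 2\<beta>\<parallel>v\<parallel>\<^sup>2 - \<langle>h(x), D\<lambda>(x) v\<rangle>\<close>. With
  \<open>\<parallel>v\<parallel> \<ge> \<sigma>\<^sub>m\<^sub>i\<^sub>n \<parallel>h(x)\<parallel>\<close> and \<open>\<beta> > \<beta>\<^sub>2, \<beta>\<^sub>3\<close> this gives \<open>\<parallel>h(x)\<parallel> \<le> \<parallel>\<nabla>g(x)\<parallel> \<le> R/2\<close>.
  Along a unit direction, (A3) gives \<open>\<parallel>h(x + t d)\<parallel> \<le> \<parallel>h(x)\<parallel> + \<sigma>\<^sub>1 t + C\<^sub>h t\<^sup>2\<close>, and \<open>t \<le> t\<^sub>2(x)\<close>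
  says exactly that \<open>C\<^sub>h t\<^sup>2 + \<sigma>\<^sub>1 t \<le> R/2\<close>. Differentiability of \<open>\<lambda>\<close>, needed to compute \<open>\<nabla>g\<close>,
  follows from Cramer's rule applied to the normal equations.\<close>

lemma smooth_has_derivative:
  assumes "smooth f"
  shows "(f has_derivative frechet_derivative f (at x)) (at x)"
  using assms unfolding smooth_def by (metis frechet_derivative_works iter_dd.simps(1))

lemma smooth_directional_derivative_differentiable:
  assumes "smooth f"
  shows "(\<lambda>y. frechet_derivative f (at y) v) differentiable (at x)"
proof -
  have "iter_dd [v] f differentiable (at x)"
    using assms unfolding smooth_def by blast
  then show ?thesis
    by simp
qed

lemma grad_inner_eq_derivative:
  fixes F :: "'a::euclidean_space \<Rightarrow> real"
  assumes F': "(F has_derivative F') (at x)"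
  shows "grad F x \<bullet> v = F' v"
proof -
  have "linear F'"
    using F' has_derivative_linear by blast
  have "v \<bullet> (\<Sum>b\<in>Basis. F' b *\<^sub>R b) = F' v" for v
  proof -
    have "F' v = F' (\<Sum>b\<in>Basis. (v \<bullet> b) *\<^sub>R b)"
      by (simp add: euclidean_representation)
    also have "\<dots> = (\<Sum>b\<in>Basis. (v \<bullet> b) * F' b)"
      using \<open>linear F'\<close> by (simp add: linear_sum linear_scale)
    finally show ?thesis
      by (simp add: inner_sum_right mult.commute)
  qed
  then have "(\<lambda>v. v \<bullet> (\<Sum>b\<in>Basis. F' b *\<^sub>R b)) = F'"
    by blast
  then have "GDERIV F x :> (\<Sum>b\<in>Basis. F' b *\<^sub>R b)"
    unfolding gderiv_def using F' by simp
  then have "GDERIV F x :> grad F x"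
    unfolding grad_def by (rule someI)
  then have "(\<lambda>v. v \<bullet> grad F x) = F'"
    unfolding gderiv_def using F' by (rule has_derivative_unique)
  from fun_cong[OF this, of v] show ?thesis
    by (simp add: inner_commute)
qed

definition is_penrose_inverse :: "('b::real_inner \<Rightarrow> 'a::real_inner) \<Rightarrow> ('a \<Rightarrow> 'b) \<Rightarrow> bool" where
  "is_penrose_inverse B P \<longleftrightarrow> linear P \<and> (\<forall>u. B (P (B u)) = B u) \<and> (\<forall>w. P (B (P w)) = P w)
      \<and> (\<forall>w z. B (P w) \<bullet> z = w \<bullet> B (P z)) \<and> (\<forall>u v. P (B u) \<bullet> v = u \<bullet> P (B v))"

lemma moore_penrose_eq_The: "moore_penrose B = (THE P. is_penrose_inverse B P)"
  unfolding moore_penrose_def is_penrose_inverse_def ..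

lemma is_penrose_inverse_left_inverse:
  assumes "is_penrose_inverse B P" "inj B"
  shows "P (B u) = u"
  using assms unfolding is_penrose_inverse_def by (meson injD)

lemma is_penrose_inverse_unique:
  assumes P: "is_penrose_inverse B P" and Q: "is_penrose_inverse B Q" and "inj B"
  shows "P = Q"
proof
  fix w
  have PB: "P (B u) = u" and QB: "Q (B u) = u" for u
    using assms is_penrose_inverse_left_inverse by blast+
  have Psym: "B (P w) \<bullet> z = w \<bullet> B (P z)" and Qsym: "B (Q w) \<bullet> z = w \<bullet> B (Q z)" for w z
    using P Q unfolding is_penrose_inverse_def by blast+
  have "B (P w) \<bullet> z = B (Q w) \<bullet> z" for z
  proof -
    have "B (P w) \<bullet> z = B (Q (B (P w))) \<bullet> z" by (simp add: QB)
    also have "\<dots> = B (P w) \<bullet> B (Q z)" by (rule Qsym)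
    also have "\<dots> = w \<bullet> B (P (B (Q z)))" by (rule Psym)
    also have "\<dots> = B (Q w) \<bullet> z" by (simp add: PB Qsym)
    finally show ?thesis .
  qed
  then have "B (P w) = B (Q w)"
    by (metis inner_diff_left inner_eq_zero_iff right_minus_eq)
  then show "P w = Q w"
    using \<open>inj B\<close> by (simp add: inj_eq)
qed

text \<open>For injective \<open>B\<close> the pseudoinverse is \<open>(B\<^sup>* B)\<^sup>-\<^sup>1 B\<^sup>*\<close>.\<close>

lemma ex_penrose_inverse:
  fixes B :: "'b::euclidean_space \<Rightarrow> 'a::euclidean_space"
  assumes B: "linear B" and "inj B"
  shows "\<exists>P. is_penrose_inverse B P"
proof -
  define G where "G = adjoint B \<circ> B"
  have G: "linear G"
    unfolding G_def using B adjoint_linear linear_compose by blast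
  have G_sym: "G a \<bullet> b = a \<bullet> G b" for a b
    unfolding G_def using adjoint_clauses[OF B] by simp
  have "inj G"
    unfolding linear_inj_iff_eq_0[OF G]
  proof (intro allI impI)
    fix u assume "G u = 0"
    then have "B u \<bullet> B u = 0"
      using adjoint_clauses(1)[OF B, of u "B u"] by (simp add: G_def)
    then show "u = 0"
      using \<open>inj B\<close> B by (simp add: linear_inj_iff_eq_0)
  qed
  then obtain Gi where Gi: "linear Gi" "\<And>x. Gi (G x) = x" "\<And>x. G (Gi x) = x"
    using linear_injective_isomorphism[OF G] by auto
  have Gi_sym: "Gi a \<bullet> b = a \<bullet> Gi b" for a b
    using G_sym[of "Gi a" "Gi b"] Gi by simp
  define P where "P = Gi \<circ> adjoint B"
  have PB: "P (B u) = u" for u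
    using Gi unfolding P_def G_def by simp
  have "is_penrose_inverse B P"
    unfolding is_penrose_inverse_def
  proof (intro conjI allI)
    show "linear P"
      unfolding P_def using Gi(1) B adjoint_linear linear_compose by blast
    show "B (P w) \<bullet> z = w \<bullet> B (P z)" for w z
    proof -
      have "B (P w) \<bullet> z = Gi (adjoint B w) \<bullet> adjoint B z"
        unfolding P_def by (simp add: adjoint_clauses[OF B])
      also have "\<dots> = adjoint B w \<bullet> Gi (adjoint B z)"
        by (rule Gi_sym)
      also have "\<dots> = w \<bullet> B (P z)"
        unfolding P_def by (simp add: adjoint_clauses[OF B])
      finally show ?thesis .
    qed
  qed (simp_all add: PB)
  then show ?thesis
    by blast
qed

lemma moore_penrose_is_penrose_inverse:
  fixes B :: "'b::euclidean_space \<Rightarrow> 'a::euclidean_space"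
  assumes "linear B" "inj B"
  shows "is_penrose_inverse B (moore_penrose B)"
  unfolding moore_penrose_eq_The
  using ex_penrose_inverse[OF assms] is_penrose_inverse_unique[OF _ _ \<open>inj B\<close>]
  by (metis theI)

lemma moore_penrose_normal_eq:
  fixes B :: "'b::euclidean_space \<Rightarrow> 'a::euclidean_space"
  assumes B: "linear B" and "inj B"
  shows "adjoint B (B (moore_penrose B w)) = adjoint B w"
proof -
  have P: "is_penrose_inverse B (moore_penrose B)"
    using moore_penrose_is_penrose_inverse[OF assms] .
  have "adjoint B (B (moore_penrose B w)) \<bullet> u = adjoint B w \<bullet> u" for u
  proof -
    have "adjoint B (B (moore_penrose B w)) \<bullet> u = B (moore_penrose B w) \<bullet> B u"
      by (simp add: adjoint_clauses[OF B])
    also have "\<dots> = w \<bullet> B (moore_penrose B (B u))"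
      using P unfolding is_penrose_inverse_def by blast
    also have "\<dots> = adjoint B w \<bullet> u"
      using is_penrose_inverse_left_inverse[OF P \<open>inj B\<close>] by (simp add: adjoint_clauses[OF B])
    finally show ?thesis .
  qed
  then show ?thesis
    by (metis inner_diff_left inner_eq_zero_iff right_minus_eq)
qed

lemma subspace_normalize:
  assumes "subspace V" "w \<in> V" "w \<noteq> 0"
  shows "w /\<^sub>R norm w \<in> V" "norm (w /\<^sub>R norm w) = 1"
  using assms by (simp_all add: subspace_scale)

lemma Inf_norm_unit_image_le:
  assumes "v \<in> V" "norm v = 1"
  shows "Inf {norm (A v) | v. v \<in> V \<and> norm v = 1} \<le> norm (A v)"
  by (rule cInf_lower) (use assms in \<open>auto intro!: bdd_belowI[where m=0]\<close>)

lemma Inf_norm_unit_image_le_sing_val: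
  fixes A :: "'a::euclidean_space \<Rightarrow> 'b::real_normed_vector"
  assumes A: "bounded_linear A" and V: "subspace V" "dim V = k" and k: "0 < k" "k \<le> DIM('a)"
  shows "Inf {norm (A v) | v. v \<in> V \<and> norm v = 1} \<le> sing_val k A"
proof -
  let ?S = "{Inf {norm (A v) | v. v \<in> W \<and> norm v = 1} | W. subspace W \<and> dim W = k}"
  have "bdd_above ?S"
  proof (rule bdd_aboveI)
    fix s assume "s \<in> ?S"
    then obtain W where W: "subspace W" "dim W = k"
      and s: "s = Inf {norm (A v) | v. v \<in> W \<and> norm v = 1}" by blast
    have "W \<noteq> {0}"
      using W k by auto
    then obtain w where w: "w \<in> W" "w \<noteq> 0"
      using subspace_0[OF W(1)] by blast
    let ?v = "w /\<^sub>R norm w"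
    have "s \<le> norm (A ?v)"
      unfolding s using subspace_normalize[OF W(1) w] by (rule Inf_norm_unit_image_le)
    also have "\<dots> \<le> onorm A"
      using onorm[OF A, of ?v] subspace_normalize[OF W(1) w] by simp
    finally show "s \<le> onorm A" .
  qed
  then show ?thesis
    unfolding sing_val_def using V k by (auto intro!: cSup_upper)
qed

lemma sing_val_le:
  fixes A :: "'a::euclidean_space \<Rightarrow> 'b::real_normed_vector"
  assumes k: "0 < k" "k \<le> DIM('a)"
    and unit: "\<And>V. subspace V \<Longrightarrow> dim V = k \<Longrightarrow> \<exists>v\<in>V. norm v = 1 \<and> norm (A v) \<le> c"
  shows "sing_val k A \<le> c"
proof -
  let ?S = "{Inf {norm (A v) | v. v \<in> W \<and> norm v = 1} | W. subspace W \<and> dim W = k}"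
  obtain V :: "'a set" where "subspace V" "dim V = k"
    using choose_subspace_of_subspace[of k "UNIV :: 'a set"] k by (auto simp: dim_UNIV)
  then have ne: "?S \<noteq> {}"
    by blast
  have "Sup ?S \<le> c"
  proof (rule cSup_least[OF ne])
    fix s assume "s \<in> ?S"
    then obtain W where "subspace W" "dim W = k" and s: "s = Inf {norm (A v) | v. v \<in> W \<and> norm v = 1}"
      by blast
    then obtain v where "v \<in> W" "norm v = 1" "norm (A v) \<le> c"
      using unit by blast
    then show "s \<le> c"
      unfolding s using Inf_norm_unit_image_le order_trans by blast
  qed
  then show ?thesis
    unfolding sing_val_def using k by simp
qed

lemma norm_le_sigma1:
  fixes A :: "'a::euclidean_space \<Rightarrow> 'b::real_normed_vector"
  assumes A: "bounded_linear A" and d: "norm d = 1"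
  shows "norm (A d) \<le> sigma1 A"
proof -
  have "{norm (A v) | v. v \<in> span {d} \<and> norm v = 1} = {norm (A d)}"
  proof safe
    fix v assume "v \<in> span {d}" "norm v = 1"
    then obtain c where "v = c *\<^sub>R d"
      by (auto simp: span_singleton)
    moreover from this have "\<bar>c\<bar> = 1"
      using \<open>norm v = 1\<close> d by simp
    ultimately show "norm (A v) = norm (A d)"
      using bounded_linear.linear[OF A] by (simp add: linear_scale)
  qed (use d in \<open>auto intro: span_base\<close>)
  moreover have "dim (span {d}) = 1"
    using d by auto
  ultimately show ?thesis
    using Inf_norm_unit_image_le_sing_val[OF A subspace_span, of "{d}" 1] DIM_positive
    unfolding sigma1_def by simp
qed

text \<open>If \<open>A\<close> is injective on \<open>V\<close>, then \<open>A V\<close> is everything and \<open>u = A w\<close> with \<open>w \<in> V\<close>;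
  Cauchy-Schwarz on \<open>\<parallel>u\<parallel>\<^sup>2 = \<langle>w, A\<^sup>* u\<rangle>\<close> gives the bound. Otherwise some unit \<open>v \<in> V\<close> has \<open>A v = 0\<close>.\<close>

lemma exists_unit_norm_mult_le_norm_adjoint:
  fixes A :: "'a::euclidean_space \<Rightarrow> 'b::euclidean_space"
  assumes A: "linear A" and V: "subspace V" "dim V = DIM('b)" and "u \<noteq> 0"
  shows "\<exists>v\<in>V. norm v = 1 \<and> norm (A v) * norm u \<le> norm (adjoint A u)"
proof -
  obtain w where w: "w \<in> V" "w \<noteq> 0"
    and bound: "norm (A w) * norm u \<le> norm (adjoint A u) * norm w"
  proof (cases "inj_on A V")
    case True
    have "span V = V"
      using V(1) by (simp add: span_eq_iff)
    then have "dim (A ` V) = DIM('b)"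
      using dim_image_eq[OF A, of V] True V(2) by metis
    then have "A ` V = UNIV"
      using dim_eq_full[of "A ` V"] span_eq_iff[of "A ` V"] linear_subspace_image[OF A V(1)] by simp
    then obtain w where w: "w \<in> V" "A w = u"
      by (metis UNIV_I imageE)
    have "norm u * norm u = w \<bullet> adjoint A u"
      using w(2) by (simp add: adjoint_clauses[OF A] flip: dot_square_norm power2_eq_square)
    also have "\<dots> \<le> norm (adjoint A u) * norm w"
      using norm_cauchy_schwarz[of w "adjoint A u"] by (simp add: mult.commute)
    finally show ?thesis
      using that w \<open>u \<noteq> 0\<close> A linear_0 by metis
  next
    case False
    then obtain w where "w \<in> V" "w \<noteq> 0" "A w = 0"
      using linear_inj_on_iff_eq_0[OF A V(1)] by blast
    then show ?thesis
      using that by simp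
  qed
  let ?v = "w /\<^sub>R norm w"
  have "norm (A ?v) * norm u = norm (A w) * norm u / norm w"
    using A by (simp add: linear_scale field_simps)
  also have "\<dots> \<le> norm (adjoint A u)"
    using bound w(2) by (simp add: divide_le_eq)
  finally show ?thesis
    using subspace_normalize[OF V(1) w] by blast
qed

lemma sigma_min_mult_norm_le_norm_adjoint:
  fixes A :: "'a::euclidean_space \<Rightarrow> real^'m::finite"
  assumes A: "linear A"
  shows "sigma_min A * norm u \<le> norm (adjoint A u)"
proof (cases "u = 0 \<or> \<not> CARD('m) \<le> DIM('a)")
  case True
  then show ?thesis
    by (auto simp: sigma_min_def sing_val_def)
next
  case False
  have "sigma_min A \<le> norm (adjoint A u) / norm u"
    unfolding sigma_min_def
  proof (rule sing_val_le)
    fix V :: "'a set" assume "subspace V" "dim V = CARD('m)"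
    then show "\<exists>v\<in>V. norm v = 1 \<and> norm (A v) \<le> norm (adjoint A u) / norm u"
      using exists_unit_norm_mult_le_norm_adjoint[OF A, of V u] False
      by (simp add: pos_le_divide_eq)
  qed (use False in auto)
  then show ?thesis
    using False by (simp add: pos_le_divide_eq)
qed

lemma differentiable_prod:
  fixes f :: "'i \<Rightarrow> 'a::real_normed_vector \<Rightarrow> 'b::real_normed_field"
  assumes "\<And>i. i \<in> I \<Longrightarrow> f i differentiable (at x within S)"
  shows "(\<lambda>x. \<Prod>i\<in>I. f i x) differentiable (at x within S)"
proof -
  obtain f' where "\<And>i. i \<in> I \<Longrightarrow> (f i has_derivative f' i) (at x within S)"
    using assms unfolding differentiable_def by metis
  then show ?thesis
    unfolding differentiable_def by (blast intro: has_derivative_prod)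
qed

lemma differentiable_det:
  fixes M :: "'a::real_normed_vector \<Rightarrow> real^'n::finite^'n"
  assumes "\<And>i j. (\<lambda>y. M y $ i $ j) differentiable (at x within S)"
  shows "(\<lambda>y. det (M y)) differentiable (at x within S)"
  unfolding det_def
  by (intro differentiable_sum differentiable_mult differentiable_const differentiable_prod ballI)
     (auto simp: assms)

lemma differentiable_vec_lambda:
  fixes F :: "'n::finite \<Rightarrow> 'a::real_normed_vector \<Rightarrow> real"
  assumes "\<And>k. F k differentiable (at x within S)"
  shows "(\<lambda>y. \<chi> k. F k y) differentiable (at x within S)"
proof -
  have "(\<chi> k. F k y) = (\<Sum>k\<in>UNIV. F k y *\<^sub>R axis k 1)" for y
    by (simp add: vec_eq_iff axis_def sum_component if_distrib cong: if_cong)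
  then show ?thesis
    by (simp add: assms)
qed

lemma differentiable_vec_nth:
  fixes F :: "'a::real_normed_vector \<Rightarrow> real^'n::finite"
  assumes "F differentiable (at x within S)"
  shows "(\<lambda>y. F y $ i) differentiable (at x within S)"
  using assms bounded_linear.has_derivative[OF bounded_linear_vec_nth]
  unfolding differentiable_def by blast

text \<open>By Cramer's rule the solution is a quotient of determinants.\<close>

lemma differentiable_linear_system_solution:
  fixes M :: "'a::real_normed_vector \<Rightarrow> real^'n::finite^'n" and c L :: "'a \<Rightarrow> real^'n"
  assumes M: "\<And>i j y. (\<lambda>y. M y $ i $ j) differentiable (at y)"
    and c: "\<And>i y. (\<lambda>y. c y $ i) differentiable (at y)"
    and solves: "\<And>y. det (M y) \<noteq> 0 \<Longrightarrow> M y *v L y = c y"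
    and invertible: "det (M x) \<noteq> 0"
  shows "L differentiable (at x)"
proof -
  define U where "U = {y. det (M y) \<noteq> 0}"
  define K where "K y = (\<chi> k. det (\<chi> i j. if j = k then c y $ i else M y $ i $ j) / det (M y))" for y
  have det_M: "(\<lambda>y. det (M y)) differentiable (at y)" for y
    using M by (rule differentiable_det)
  have "open U"
    unfolding U_def
    by (rule open_Collect_neq)
       (auto intro!: continuous_at_imp_continuous_on differentiable_imp_continuous_within det_M)
  have "L y = K y" if "y \<in> U" for y
    using that solves cramer unfolding U_def K_def by blast
  moreover have "K differentiable (at x)"
    unfolding K_def
  proof (intro differentiable_vec_lambda differentiable_divide differentiable_det det_M invertible)
    show "(\<lambda>y. (\<chi> i j. if j = k then c y $ i else M y $ i $ j) $ i $ j) differentiable (at x)" for i j k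
      by (cases "j = k") (simp_all add: M c)
  qed (rule M)
  moreover have "x \<in> U"
    using invertible unfolding U_def by simp
  ultimately show ?thesis
    using \<open>open U\<close> has_derivative_transform_within_open[of K _ x UNIV U L]
    unfolding differentiable_def by fastforce
qed

definition gram_matrix :: "('a::euclidean_space \<Rightarrow> real^'m::finite) \<Rightarrow> real^'m^'m" where
  "gram_matrix A = (\<chi> i j. \<Sum>b\<in>Basis. A b $ i * A b $ j)"

lemma gram_matrix_mult:
  fixes A :: "'a::euclidean_space \<Rightarrow> real^'m::finite"
  assumes A: "linear A"
  shows "gram_matrix A *v u = A (adjoint A u)"
proof -
  have "adjoint A u = (\<Sum>b\<in>Basis. (u \<bullet> A b) *\<^sub>R b)"
    by (subst euclidean_representation[symmetric]) (simp add: adjoint_clauses[OF A] inner_commute)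
  then have "A (adjoint A u) = (\<Sum>b\<in>Basis. (u \<bullet> A b) *\<^sub>R A b)"
    using A by (simp add: linear_sum linear_scale)
  then show ?thesis
    by (simp add: vec_eq_iff gram_matrix_def matrix_vector_mult_def inner_vec_def sum_component
        sum_distrib_left sum_distrib_right mult_ac sum.swap[where A=Basis])
qed

lemma det_gram_matrix_nonzero_iff:
  fixes A :: "'a::euclidean_space \<Rightarrow> real^'m::finite"
  assumes A: "linear A"
  shows "det (gram_matrix A) \<noteq> 0 \<longleftrightarrow> inj (adjoint A)"
proof -
  have "det (gram_matrix A) \<noteq> 0 \<longleftrightarrow> inj (\<lambda>u. gram_matrix A *v u)"
    using det_nz_iff_inj[of "\<lambda>u. gram_matrix A *v u"] by simp
  also have "\<dots> \<longleftrightarrow> inj (\<lambda>u. A (adjoint A u))"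
    by (simp add: gram_matrix_mult[OF A])
  also have "\<dots> \<longleftrightarrow> inj (adjoint A)"
  proof
    assume "inj (\<lambda>u. A (adjoint A u))"
    then show "inj (adjoint A)"
      unfolding inj_def by auto
  next
    assume inj: "inj (adjoint A)"
    have "A (adjoint A u) = 0 \<Longrightarrow> u = 0" for u
    proof -
      assume "A (adjoint A u) = 0"
      then have "adjoint A u \<bullet> adjoint A u = 0"
        by (simp add: adjoint_clauses[OF A])
      then show "u = 0"
        using inj adjoint_linear[OF A] by (simp add: linear_inj_iff_eq_0)
    qed
    then show "inj (\<lambda>u. A (adjoint A u))"
      using A adjoint_linear[OF A] by (simp add: linear_inj_iff_eq_0 linear_compose[unfolded o_def])
  qed
  finally show ?thesis .
qed

lemma bounded_linear_Dh:
  assumes "smooth h"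
  shows "bounded_linear (Dh h x)"
  using smooth_has_derivative[OF assms] has_derivative_bounded_linear unfolding Dh_def by blast

lemma Dh_grad_eq_sum:
  assumes f: "smooth f" and h: "smooth h"
  shows "Dh h y (grad f y) = (\<Sum>b\<in>Basis. frechet_derivative f (at y) b *\<^sub>R Dh h y b)"
proof -
  have "grad f y = (\<Sum>b\<in>Basis. frechet_derivative f (at y) b *\<^sub>R b)"
    by (subst euclidean_representation[symmetric])
       (simp add: grad_inner_eq_derivative[OF smooth_has_derivative[OF f]])
  then show ?thesis
    using bounded_linear.linear[OF bounded_linear_Dh[OF h]] by (simp add: linear_sum linear_scale)
qed

lemma lam_differentiable:
  fixes f :: "'a::euclidean_space \<Rightarrow> real" and h :: "'a \<Rightarrow> real^'m::finite"
  assumes f: "smooth f" and h: "smooth h" and inj: "inj (adjoint (Dh h x))"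
  shows "lam f h differentiable (at x)"
proof (rule differentiable_linear_system_solution)
  have lin: "linear (Dh h y)" for y
    using bounded_linear_Dh[OF h] bounded_linear.linear by blast
  have Dh_diff: "(\<lambda>y. Dh h y b) differentiable (at y)" for b y
    unfolding Dh_def using smooth_directional_derivative_differentiable[OF h] .
  show "(\<lambda>y. gram_matrix (Dh h y) $ i $ j) differentiable (at y)" for i j y
    unfolding gram_matrix_def by (simp add: differentiable_vec_nth Dh_diff)
  show "(\<lambda>y. Dh h y (grad f y) $ i) differentiable (at y)" for i y
    unfolding Dh_grad_eq_sum[OF f h]
    by (intro differentiable_vec_nth differentiable_sum differentiable_scaleR ballI finite_Basis
        Dh_diff smooth_directional_derivative_differentiable[OF f])
  show "gram_matrix (Dh h y) *v lam f h y = Dh h y (grad f y)"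
    if "det (gram_matrix (Dh h y)) \<noteq> 0" for y
    using that moore_penrose_normal_eq[OF adjoint_linear[OF lin]]
    by (simp add: gram_matrix_mult lin det_gram_matrix_nonzero_iff adjoint_adjoint lam_def)
  show "det (gram_matrix (Dh h x)) \<noteq> 0"
    using inj by (simp add: det_gram_matrix_nonzero_iff lin)
qed

lemma grad_gfun_inner_adjoint:
  fixes f :: "'a::euclidean_space \<Rightarrow> real" and h :: "'a \<Rightarrow> real^'m::finite"
  assumes f: "smooth f" and h: "smooth h" and inj: "inj (adjoint (Dh h x))"
    and lam': "(lam f h has_derivative L') (at x)"
  defines "v \<equiv> adjoint (Dh h x) (h x)"
  shows "grad (gfun f h \<beta>) x \<bullet> v = 2 * \<beta> * (norm v)\<^sup>2 - h x \<bullet> L' v"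
proof -
  define A where "A = Dh h x"
  have A: "linear A"
    unfolding A_def using bounded_linear_Dh[OF h] bounded_linear.linear by blast
  have h': "(h has_derivative A) (at x)"
    unfolding A_def Dh_def using smooth_has_derivative[OF h] .
  have "gfun f h \<beta> = (\<lambda>y. f y - h y \<bullet> lam f h y + \<beta> * (h y \<bullet> h y))"
    unfolding gfun_def by (simp add: power2_norm_eq_inner)
  then have "(gfun f h \<beta> has_derivative
      (\<lambda>v. frechet_derivative f (at x) v - (h x \<bullet> L' v + A v \<bullet> lam f h x) + \<beta> * (h x \<bullet> A v + A v \<bullet> h x))) (at x)"
    by (auto intro!: derivative_eq_intros smooth_has_derivative[OF f] h' lam')
  from grad_inner_eq_derivative[OF this, of v]
  have "grad (gfun f h \<beta>) x \<bullet> v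
      = (grad f x \<bullet> v - A v \<bullet> lam f h x) - h x \<bullet> L' v + 2 * \<beta> * (h x \<bullet> A v)"
    using grad_inner_eq_derivative[OF smooth_has_derivative[OF f, of x], of v]
    by (simp add: inner_commute algebra_simps)
  also have "grad f x \<bullet> v - A v \<bullet> lam f h x = h x \<bullet> (A (grad f x) - A (adjoint A (lam f h x)))"
  proof -
    have "A v \<bullet> lam f h x = h x \<bullet> A (adjoint A (lam f h x))"
      unfolding v_def A_def[symmetric] by (metis adjoint_clauses[OF A] inner_commute)
    then show ?thesis
      unfolding v_def A_def[symmetric] by (simp add: adjoint_clauses[OF A] inner_diff_right inner_commute)
  qed
  also have "A (adjoint A (lam f h x)) = A (grad f x)"
    using moore_penrose_normal_eq[OF adjoint_linear[OF A] inj[folded A_def], of "grad f x"]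
    by (simp add: adjoint_adjoint[OF A] lam_def flip: A_def)
  also have "h x \<bullet> A v = (norm v)\<^sup>2"
    unfolding v_def A_def[symmetric] by (simp add: adjoint_clauses[OF A] power2_norm_eq_inner inner_commute)
  finally show ?thesis
    by simp
qed

lemma norm_le_norm_of_inner_ge:
  fixes G v :: "'a::real_inner" and y :: "'b::real_normed_vector"
  assumes s: "s > 0" and "\<beta> * s > C" "\<beta> * s > 1"
    and v: "s * norm y \<le> norm v"
    and inner: "2 * \<beta> * (norm v)\<^sup>2 - C * norm y * norm v \<le> G \<bullet> v"
  shows "norm y \<le> norm G"
proof (cases "y = 0")
  case False
  then have "norm v > 0"
    using s v by (meson less_le_trans mult_pos_pos zero_less_norm_iff)
  have "\<beta> \<ge> 0"
    using \<open>\<beta> * s > 1\<close> s by (smt (verit) mult_nonpos_nonneg)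
  have "(2 * \<beta> * norm v - C * norm y) * norm v \<le> G \<bullet> v"
    using inner by (simp add: power2_eq_square algebra_simps)
  also have "\<dots> \<le> norm G * norm v"
    by (rule norm_cauchy_schwarz)
  finally have "2 * \<beta> * norm v - C * norm y \<le> norm G"
    using \<open>norm v > 0\<close> by simp
  moreover have "\<beta> * (s * norm y) \<le> \<beta> * norm v"
    using v \<open>\<beta> \<ge> 0\<close> by (rule mult_left_mono)
  moreover have "norm y \<le> (2 * (\<beta> * s) - C) * norm y"
    using \<open>\<beta> * s > C\<close> \<open>\<beta> * s > 1\<close> mult_right_mono[of 1 "2 * (\<beta> * s) - C" "norm y"] by simp
  ultimately show ?thesis
    by (simp add: algebra_simps)
qed simp

lemma norm_le_norm_grad_gfun:
  fixes f :: "'a::euclidean_space \<Rightarrow> real" and h :: "'a \<Rightarrow> real^'m::finite"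
  assumes f: "smooth f" and h: "smooth h" and sigma_pos: "sigma_min (Dh h x) > 0"
    and beta2: "\<beta> > beta2 f h x" and beta3: "\<beta> > beta3 h x"
  shows "norm (h x) \<le> norm (grad (gfun f h \<beta>) x)"
proof -
  define A where "A = Dh h x"
  define s where "s = sigma_min A"
  define v where "v = adjoint A (h x)"
  have A: "linear A"
    unfolding A_def using bounded_linear_Dh[OF h] bounded_linear.linear by blast
  have s: "s > 0"
    using sigma_pos unfolding s_def A_def .
  have adj_lower: "s * norm u \<le> norm (adjoint A u)" for u
    unfolding s_def using sigma_min_mult_norm_le_norm_adjoint[OF A] .
  have "inj (adjoint A)"
    unfolding linear_inj_iff_eq_0[OF adjoint_linear[OF A]]
  proof (intro allI impI)
    fix u assume "adjoint A u = 0"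
    then have "s * norm u \<le> 0"
      using adj_lower[of u] by simp
    then show "u = 0"
      using s by (simp add: mult_le_0_iff)
  qed
  obtain L' where L': "(lam f h has_derivative L') (at x)"
    using lam_differentiable[OF f h \<open>inj (adjoint A)\<close>[unfolded A_def]]
    unfolding differentiable_def by blast
  define C where "C = onorm L'"
  have "C_lam f h x = C"
    unfolding C_lam_def C_def using frechet_derivative_at[OF L'] by simp
  then have "\<beta> * s > C" "\<beta> * s > 1"
    using beta2 beta3 s unfolding beta2_def beta3_def s_def A_def by (simp_all add: field_simps)
  have "\<bar>h x \<bullet> L' v\<bar> \<le> norm (h x) * norm (L' v)"
    by (rule Cauchy_Schwarz_ineq2)
  also have "\<dots> \<le> C * norm (h x) * norm v"
    using mult_left_mono[OF onorm[OF has_derivative_bounded_linear[OF L'], of v] norm_ge_zero[of "h x"]]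
    unfolding C_def by (simp add: mult_ac)
  finally have "2 * \<beta> * (norm v)\<^sup>2 - C * norm (h x) * norm v \<le> 2 * \<beta> * (norm v)\<^sup>2 - h x \<bullet> L' v"
    by linarith
  also have "\<dots> = grad (gfun f h \<beta>) x \<bullet> v"
    using grad_gfun_inner_adjoint[OF f h _ L', of \<beta>] \<open>inj (adjoint A)\<close>
    unfolding v_def A_def by simp
  finally show ?thesis
    using norm_le_norm_of_inner_ge[OF s \<open>\<beta> * s > C\<close> \<open>\<beta> * s > 1\<close>] adj_lower[of "h x"]
    unfolding v_def by blast
qed

lemma quadratic_le_of_le_root:
  fixes a b r t :: real
  assumes a: "a > 0" and b: "b \<ge> 0" and t: "t \<ge> 0"
    and t_le: "t \<le> (- b + sqrt (b\<^sup>2 + 4 * a * r)) / (2 * a)"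
  shows "a * t\<^sup>2 + b * t \<le> r"
proof -
  have "0 \<le> 2 * a * t + b"
    using a b t by simp
  moreover have "2 * a * t + b \<le> sqrt (b\<^sup>2 + 4 * a * r)"
    using t_le a by (simp add: field_simps)
  ultimately have "(2 * a * t + b)\<^sup>2 \<le> b\<^sup>2 + 4 * a * r"
    by (metis order.trans power_mono real_sqrt_ge_0_iff real_sqrt_pow2)
  then have "4 * a * (a * t\<^sup>2 + b * t) \<le> 4 * a * r"
    by (simp add: power2_eq_square algebra_simps)
  then show ?thesis
    using a by simp
qed

lemma norm_le_first_order_bound:
  fixes A :: "'a::euclidean_space \<Rightarrow> 'b::real_normed_vector"
  assumes A: "bounded_linear A" and d: "norm d = 1" and t: "0 \<le> t"
    and remainder: "norm (h (x + t *\<^sub>R d) - h x - A (t *\<^sub>R d)) \<le> C * (norm (t *\<^sub>R d))\<^sup>2"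
  shows "norm (h (x + t *\<^sub>R d)) \<le> norm (h x) + sigma1 A * t + C * t\<^sup>2"
proof -
  let ?r = "h (x + t *\<^sub>R d) - h x - A (t *\<^sub>R d)"
  have "norm (h (x + t *\<^sub>R d)) \<le> norm (h x) + norm (A (t *\<^sub>R d)) + norm ?r"
    using norm_triangle_ineq[of "h x + A (t *\<^sub>R d)" ?r] norm_triangle_ineq[of "h x" "A (t *\<^sub>R d)"]
    by simp
  moreover have "norm (A (t *\<^sub>R d)) \<le> sigma1 A * t"
    using norm_le_sigma1[OF A d] t bounded_linear.linear[OF A]
    by (simp add: linear_scale mult_left_mono mult.commute)
  moreover have "norm ?r \<le> C * t\<^sup>2"
    using remainder d t by simp
  ultimately show ?thesis
    by linarith
qed

theorem mainTheorem9:
  fixes f :: "'a::euclidean_space \<Rightarrow> real"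
    and h :: "'a \<Rightarrow> real^'m::finite"
    and R sig Ch \<beta> \<epsilon>1 :: real
    and x :: 'a
  assumes f_smooth: "smooth f"
    and h_smooth: "smooth h"
    and A1: "R > 0" "sig > 0" "\<forall>y. norm (h y) \<le> R \<longrightarrow> sigma_min (Dh h y) \<ge> sig"
    and A3: "Ch > 0"
       "\<forall>y v. norm (h y) \<le> R \<longrightarrow> norm (h (y + v) - h y - Dh h y v) \<le> Ch * (norm v)\<^sup>2"
    and beta_nonneg: "\<beta> \<ge> 0"
    and xC: "norm (h x) \<le> R"
    and beta_big: "\<beta> > max (beta1 f h x) (max (beta2 f h x) (beta3 h x))"
    and grad_small: "norm (grad (gfun f h \<beta>) x) \<le> \<epsilon>1"
    and eps: "\<epsilon>1 \<le> R / 2"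
  shows "\<forall>d t. norm d = 1 \<longrightarrow> 0 \<le> t \<longrightarrow>
           t \<le> (- sigma1 (Dh h x) + sqrt ((sigma1 (Dh h x))\<^sup>2 + 2 * Ch * R)) / (2 * Ch) \<longrightarrow>
           norm (h (x + t *\<^sub>R d)) \<le> R"
proof (intro allI impI)
  \<comment> \<open>Only \<open>\<beta> > \<beta>\<^sub>2(x), \<beta>\<^sub>3(x)\<close> is needed.\<close>
  fix d :: 'a and t :: real
  assume d: "norm d = 1" and t: "0 \<le> t"
    and t_le: "t \<le> (- sigma1 (Dh h x) + sqrt ((sigma1 (Dh h x))\<^sup>2 + 2 * Ch * R)) / (2 * Ch)"
  have A: "bounded_linear (Dh h x)"
    using bounded_linear_Dh[OF h_smooth] .
  have "norm (h x) \<le> R / 2"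
    using norm_le_norm_grad_gfun[OF f_smooth h_smooth, of x \<beta>] A1 xC beta_big grad_small eps
    by fastforce
  moreover have "norm (h (x + t *\<^sub>R d)) \<le> norm (h x) + sigma1 (Dh h x) * t + Ch * t\<^sup>2"
    using norm_le_first_order_bound[OF A d t] A3(2) xC by blast
  moreover have "Ch * t\<^sup>2 + sigma1 (Dh h x) * t \<le> R / 2"
    using quadratic_le_of_le_root[OF A3(1) _ t, of "sigma1 (Dh h x)" "R / 2"] t_le
      order_trans[OF norm_ge_zero norm_le_sigma1[OF A d]]
    by (simp add: mult.assoc)
  ultimately show "norm (h (x + t *\<^sub>R d)) \<le> R"
    by linarith
qed

end
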